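(* Let $A=A_n$ be an $n\times n$ real symmetric random matrix whose entries $(a_{ij})_{1\le i\le j\le n}$ are independent Bernoulli$(p)$, $p=p_n$, and let $\lambda_1(A)$ be its largest eigenvalue. There exist an absolute constant $c>0$ and, for each $w\in(0,1)$, an integer $m(w)$ such that: whenever $w\in(0,1)$, $n^{w-1}\le p_n\le\tfrac12$ for all $n$, and $m=m_n$ are integers with $m(w)\le m_n\le c\min(n^{w/4},\sqrt{p_nn^{1-w}})$, then $$\lim_{n\to\infty} n^2p_n\,\mathbb{E}\Bigl[\Bigl(\frac{\lambda_1(A)}{\mathbb{E}[\lambda_1(A)]}-1\Bigr)^{2m}\Bigr]=0.$$
   Context: Diagonal entries of $A$ are included and are independent Bernoulli$(p_n)$. *)

theory Defs
  imports "HOL-Probability.Probability" "Jordan_Normal_Form.Char_Poly"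
begin

definition sym_bern_mat :: "nat \<Rightarrow> (nat \<times> nat \<Rightarrow> bool) \<Rightarrow> real mat" where
  "sym_bern_mat n f = mat n n (\<lambda>(i,j). if f (min i j, max i j) then 1 else 0)"

definition entries_pmf :: "nat \<Rightarrow> real \<Rightarrow> (nat \<times> nat \<Rightarrow> bool) pmf" where
  "entries_pmf n p = Pi_pmf {(i,j). i \<le> j \<and> j < n} False (\<lambda>_. bernoulli_pmf p)"

definition lambda1 :: "real mat \<Rightarrow> real" where
  "lambda1 A = Max {k. eigenvalue A k}"

definition E_lambda1 :: "nat \<Rightarrow> real \<Rightarrow> real" where
  "E_lambda1 n p = measure_pmf.expectation (entries_pmf n p) (\<lambda>f. lambda1 (sym_bern_mat n f))"

end

theory Submission
  imports Defs
begin

text \<open>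
  The largest eigenvalue of a nonnegative symmetric matrix lies between its mean row sum (the
  Rayleigh quotient of the constant vector) and its maximal row sum.  For the random matrix the row
  sums are the vertex degrees, each a sum of n independent Bernoulli(p) variables, so
  (\<lambda>1 - np)^(2m) is dominated by the sum over all vertices of (deg - np)^(2m).  The binomial
  moment generating function gives E (deg - np)^(2m) \<le> 2e (2m)! (np)^m.  Since E \<lambda>1 \<ge> np,
  recentring at E \<lambda>1 and normalising costs at most 2^(2m+1) / (np)^(2m), so the normalised
  moment is at most 4e n (16 m^2 / (np))^m, which the constraints on m and p make O(n^-3).
\<close>

section \<open>Rayleigh quotients and the largest eigenvalue\<close>

definition quad_form :: "nat \<Rightarrow> real mat \<Rightarrow> (nat \<Rightarrow> real) \<Rightarrow> real" where
  "quad_form n M x = (\<Sum>i<n. \<Sum>j<n. M $$ (i,j) * x i * x j)"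

definition sum_sq :: "nat \<Rightarrow> (nat \<Rightarrow> real) \<Rightarrow> real" where
  "sum_sq n x = (\<Sum>i<n. (x i)^2)"

lemma sum_sq_nonneg: "0 \<le> sum_sq n x"
  unfolding sum_sq_def by (simp add: sum_nonneg)

lemma sq_le_sum_sq: "i < n \<Longrightarrow> (x i)^2 \<le> sum_sq n x"
  unfolding sum_sq_def by (rule member_le_sum) auto

lemma sum_sq_eq_0_iff: "sum_sq n x = 0 \<longleftrightarrow> (\<forall>i<n. x i = 0)"
  unfolding sum_sq_def by (auto simp: sum_nonneg_eq_0_iff)

lemma quad_form_cong: "(\<And>i. i < n \<Longrightarrow> x i = y i) \<Longrightarrow> quad_form n M x = quad_form n M y"
  unfolding quad_form_def by simp

lemma sum_sq_cong: "(\<And>i. i < n \<Longrightarrow> x i = y i) \<Longrightarrow> sum_sq n x = sum_sq n y"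
  unfolding sum_sq_def by simp

lemma quad_form_scale: "quad_form n M (\<lambda>i. c * x i) = c^2 * quad_form n M x"
  unfolding quad_form_def power2_eq_square by (simp add: sum_distrib_left algebra_simps)

lemma sum_sq_scale: "sum_sq n (\<lambda>i. c * x i) = c^2 * sum_sq n x"
  unfolding sum_sq_def by (simp add: sum_distrib_left power_mult_distrib)

lemma quad_form_add_scaled:
  assumes sym: "\<And>i j. i < n \<Longrightarrow> j < n \<Longrightarrow> M $$ (i,j) = M $$ (j,i)"
  shows "quad_form n M (\<lambda>i. x i + t * v i) = quad_form n M x
           + 2 * t * (\<Sum>i<n. v i * (\<Sum>j<n. M $$ (i,j) * x j)) + t^2 * quad_form n M v"
proof -
  have swap: "(\<Sum>i<n. \<Sum>j<n. M $$ (i,j) * x i * v j) = (\<Sum>i<n. \<Sum>j<n. M $$ (i,j) * v i * x j)"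
    by (subst sum.swap) (intro sum.cong refl, auto simp: sym mult.commute)
  have pointwise: "M $$ (i,j) * (x i + t * v i) * (x j + t * v j) = M $$ (i,j) * x i * x j
     + t * (M $$ (i,j) * v i * x j) + t * (M $$ (i,j) * x i * v j) + t^2 * (M $$ (i,j) * v i * v j)"
    for i j by (simp add: algebra_simps power2_eq_square)
  have expand: "quad_form n M (\<lambda>i. x i + t * v i) = quad_form n M x
     + t * (\<Sum>i<n. \<Sum>j<n. M $$ (i,j) * v i * x j) + t * (\<Sum>i<n. \<Sum>j<n. M $$ (i,j) * x i * v j)
     + t^2 * quad_form n M v"
    unfolding quad_form_def pointwise by (simp only: sum.distrib flip: sum_distrib_left)
  have factor: "(\<Sum>i<n. \<Sum>j<n. M $$ (i,j) * v i * x j) = (\<Sum>i<n. v i * (\<Sum>j<n. M $$ (i,j) * x j))"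
    by (simp add: sum_distrib_left mult_ac)
  show ?thesis by (simp only: expand swap factor)
qed

lemma sum_sq_add_scaled:
  "sum_sq n (\<lambda>i. x i + t * v i) = sum_sq n x + 2 * t * (\<Sum>i<n. x i * v i) + t^2 * sum_sq n v"
proof -
  have "(x i + t * v i)^2 = (x i)^2 + 2 * t * (x i * v i) + t^2 * (v i)^2" for i
    by (simp add: algebra_simps power2_eq_square)
  then show ?thesis
    unfolding sum_sq_def by (simp only: sum.distrib flip: sum_distrib_left)
qed

lemma quad_form_attains_max_on_sphere:
  assumes "n > 0"
  obtains x where "sum_sq n x = 1" "\<And>y. sum_sq n y = 1 \<Longrightarrow> quad_form n M y \<le> quad_form n M x"
proof -
  define box where "box = PiE UNIV (\<lambda>i. if i < n then {-1..1::real} else {0})"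
  define S where "S = box \<inter> {x. sum_sq n x = 1}"
  have "compactin (product_topology (\<lambda>i. euclidean) UNIV) box"
    unfolding box_def by (subst compactin_PiE) auto
  then have "compact box"
    by (simp add: euclidean_product_topology)
  moreover have "closed {x. sum_sq n x = 1}"
    unfolding sum_sq_def
    by (intro closed_Collect_eq continuous_intros continuous_on_product_coordinates)
  ultimately have "compact S"
    unfolding S_def by (rule compact_Int_closed)
  have restrict_in_S: "(\<lambda>i. if i < n then y i else 0) \<in> S" if "sum_sq n y = 1" for y
  proof -
    have "\<bar>y i\<bar> \<le> 1" if "i < n" for i
      using sq_le_sum_sq[OF that, of y] \<open>sum_sq n y = 1\<close> by (simp add: abs_square_le_1)
    moreover have "sum_sq n (\<lambda>i. if i < n then y i else 0) = 1"
      using \<open>sum_sq n y = 1\<close> by (subst sum_sq_cong[of n _ y]) auto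
    ultimately show ?thesis
      unfolding S_def box_def by (auto simp: PiE_def Pi_def extensional_def abs_le_iff)
  qed
  have "sum_sq n (\<lambda>_. 1 / sqrt n) = 1"
    using assms by (simp add: sum_sq_def power_divide)
  then have "S \<noteq> {}"
    using restrict_in_S by blast
  moreover have "continuous_on S (quad_form n M)"
    unfolding quad_form_def
    by (intro continuous_intros continuous_on_subset[OF continuous_on_product_coordinates]) auto
  ultimately obtain x where "x \<in> S" and x_max: "\<And>y. y \<in> S \<Longrightarrow> quad_form n M y \<le> quad_form n M x"
    using continuous_attains_sup[OF \<open>compact S\<close>] by blast
  show thesis
  proof
    show "sum_sq n x = 1" using \<open>x \<in> S\<close> unfolding S_def by simp
    show "quad_form n M y \<le> quad_form n M x" if "sum_sq n y = 1" for y
      using x_max[OF restrict_in_S[OF that]] by (subst quad_form_cong[of n y]) auto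
  qed
qed

lemma quad_form_le_by_homogeneity:
  assumes "\<And>z. sum_sq n z = 1 \<Longrightarrow> quad_form n M z \<le> \<nu>"
  shows "quad_form n M y \<le> \<nu> * sum_sq n y"
proof (cases "sum_sq n y = 0")
  case True
  then have "quad_form n M y = quad_form n M (\<lambda>_. 0)"
    by (intro quad_form_cong) (simp add: sum_sq_eq_0_iff)
  with True show ?thesis by (simp add: quad_form_def)
next
  case False
  then have pos: "sum_sq n y > 0" using sum_sq_nonneg[of n y] by linarith
  define s where "s = sqrt (sum_sq n y)"
  have "s > 0" and s2: "s^2 = sum_sq n y" unfolding s_def using pos by auto
  have "sum_sq n (\<lambda>i. (1/s) * y i) = 1"
    using \<open>s > 0\<close> s2 pos unfolding sum_sq_scale by (simp add: power_divide)
  then have "(1/s)^2 * quad_form n M y \<le> \<nu>"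
    using assms by (simp only: quad_form_scale[symmetric])
  then have "s^2 * ((1/s)^2 * quad_form n M y) \<le> s^2 * \<nu>"
    by (rule mult_left_mono) simp
  then show ?thesis
    using \<open>s > 0\<close> s2 pos by (simp add: power_divide mult.commute)
qed

lemma nonneg_eq_0_if_quadratic_nonpos:
  fixes a b :: real
  assumes "0 \<le> a" and nonpos: "\<And>t. 2 * t * a + t^2 * b \<le> 0"
  shows "a = 0"
proof (rule ccontr)
  assume "a \<noteq> 0"
  with \<open>0 \<le> a\<close> have "a > 0" by simp
  define t where "t = a / (\<bar>b\<bar> + 1)"
  have "t > 0" unfolding t_def using \<open>a > 0\<close> by simp
  have "t * \<bar>b\<bar> < a"
  proof -
    have "t * \<bar>b\<bar> = a * (\<bar>b\<bar> / (\<bar>b\<bar> + 1))" unfolding t_def by simp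
    also have "\<dots> < a" using \<open>a > 0\<close> by (simp add: divide_less_eq)
    finally show ?thesis .
  qed
  then have "t^2 * \<bar>b\<bar> < t * a" using \<open>t > 0\<close> by (simp add: power2_eq_square)
  moreover have "- (t^2 * \<bar>b\<bar>) \<le> t^2 * b" by (simp add: abs_if)
  moreover have "t * a > 0" using \<open>t > 0\<close> \<open>a > 0\<close> by simp
  ultimately show False using nonpos[of t] by linarith
qed

text \<open>Moving the maximiser x along the residual v = M x - \<nu> x changes
  quad_form x - \<nu> sum_sq x by 2t sum_sq v + O(t^2), so maximality forces v = 0.\<close>

lemma rayleigh_maximizer_is_eigenvector:
  assumes sym: "\<And>i j. i < n \<Longrightarrow> j < n \<Longrightarrow> M $$ (i,j) = M $$ (j,i)"
    and unit: "sum_sq n x = 1"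
    and max: "\<And>y. quad_form n M y \<le> quad_form n M x * sum_sq n y"
    and "i < n"
  shows "(\<Sum>j<n. M $$ (i,j) * x j) = quad_form n M x * x i"
proof -
  define \<nu> where "\<nu> = quad_form n M x"
  define v where "v = (\<lambda>i. (\<Sum>j<n. M $$ (i,j) * x j) - \<nu> * x i)"
  define a where "a = (\<Sum>i<n. v i * (\<Sum>j<n. M $$ (i,j) * x j))"
  define c where "c = (\<Sum>i<n. x i * v i)"
  have "a - \<nu> * c = (\<Sum>i<n. v i * ((\<Sum>j<n. M $$ (i,j) * x j) - \<nu> * x i))"
    unfolding a_def c_def by (simp add: sum_distrib_left sum_subtractf algebra_simps)
  also have "\<dots> = sum_sq n v"
    unfolding sum_sq_def v_def by (simp add: power2_eq_square)
  finally have residual: "a - \<nu> * c = sum_sq n v" .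
  have "2 * t * sum_sq n v + t^2 * (quad_form n M v - \<nu> * sum_sq n v) \<le> 0" for t
  proof -
    have "\<nu> + 2 * t * a + t^2 * quad_form n M v \<le> \<nu> * (1 + 2 * t * c + t^2 * sum_sq n v)"
      using max[of "\<lambda>i. x i + t * v i"] unit unfolding \<nu>_def a_def c_def
      by (simp only: quad_form_add_scaled[OF sym] sum_sq_add_scaled)
    then show ?thesis
      unfolding residual[symmetric] by (simp add: algebra_simps)
  qed
  then have "sum_sq n v = 0"
    using nonneg_eq_0_if_quadratic_nonpos[OF sum_sq_nonneg] by blast
  then show ?thesis
    using \<open>i < n\<close> unfolding sum_sq_eq_0_iff v_def \<nu>_def by simp
qed

lemma eigenvalueI_fun:
  fixes M :: "real mat"
  assumes M: "M \<in> carrier_mat n n" and "i < n" "x i \<noteq> 0"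
    and eigen: "\<And>i. i < n \<Longrightarrow> (\<Sum>j<n. M $$ (i,j) * x j) = \<nu> * x i"
  shows "eigenvalue M \<nu>"
  unfolding eigenvalue_def eigenvector_def
proof (intro exI[of _ "vec n x"] conjI)
  show "vec n x \<in> carrier_vec (dim_row M)" using M by simp
  show "vec n x \<noteq> 0\<^sub>v (dim_row M)"
    using M \<open>i < n\<close> \<open>x i \<noteq> 0\<close> by (metis carrier_matD(1) index_vec index_zero_vec(1))
  show "M *\<^sub>v vec n x = \<nu> \<cdot>\<^sub>v vec n x"
  proof (rule eq_vecI)
    fix k assume "k < dim_vec (\<nu> \<cdot>\<^sub>v vec n x)"
    then have "k < n" by simp
    then have "(M *\<^sub>v vec n x) $ k = (\<Sum>j<n. M $$ (k,j) * x j)"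
      using M by (simp add: scalar_prod_def lessThan_atLeast0)
    with eigen[OF \<open>k < n\<close>] \<open>k < n\<close> show "(M *\<^sub>v vec n x) $ k = (\<nu> \<cdot>\<^sub>v vec n x) $ k"
      by simp
  qed (use M in simp)
qed

lemma symmetric_eigenvalue_ge_rayleigh:
  fixes M :: "real mat"
  assumes M: "M \<in> carrier_mat n n" and sym: "\<And>i j. i < n \<Longrightarrow> j < n \<Longrightarrow> M $$ (i,j) = M $$ (j,i)"
    and "n > 0"
  shows "\<exists>\<nu>. eigenvalue M \<nu> \<and> (\<forall>y. quad_form n M y \<le> \<nu> * sum_sq n y)"
proof -
  obtain x where unit: "sum_sq n x = 1"
    and max: "\<And>y. sum_sq n y = 1 \<Longrightarrow> quad_form n M y \<le> quad_form n M x"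
    using quad_form_attains_max_on_sphere[OF \<open>n > 0\<close>] by blast
  have bound: "\<forall>y. quad_form n M y \<le> quad_form n M x * sum_sq n y"
    using quad_form_le_by_homogeneity max by blast
  obtain i where "i < n" "x i \<noteq> 0"
    using unit sum_sq_eq_0_iff[of n x] by auto
  then have "eigenvalue M (quad_form n M x)"
    using eigenvalueI_fun[OF M] rayleigh_maximizer_is_eigenvector[OF sym unit] bound by blast
  with bound show ?thesis by blast
qed

lemma eigenvalue_le_abs_row_sum:
  fixes M :: "real mat"
  assumes M: "M \<in> carrier_mat n n" and "eigenvalue M k"
  shows "\<exists>i<n. \<bar>k\<bar> \<le> (\<Sum>j<n. \<bar>M $$ (i,j)\<bar>)"
proof -
  obtain v where v: "v \<in> carrier_vec n" "v \<noteq> 0\<^sub>v n" "M *\<^sub>v v = k \<cdot>\<^sub>v v"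
    using assms unfolding eigenvalue_def eigenvector_def by auto
  have "\<exists>j<n. v $ j \<noteq> 0"
  proof (rule ccontr)
    assume "\<not> ?thesis"
    then have "v = 0\<^sub>v n" using v(1) by (intro eq_vecI) auto
    with v(2) show False by simp
  qed
  then obtain j0 where "j0 < n" "v $ j0 \<noteq> 0" by blast
  define S where "S = (\<lambda>j. \<bar>v $ j\<bar>) ` {..<n}"
  have fin: "finite S" "S \<noteq> {}" unfolding S_def using \<open>j0 < n\<close> by auto
  obtain i where "i < n" "\<bar>v $ i\<bar> = Max S"
    using Max_in[OF fin] unfolding S_def by auto
  have i_max: "\<bar>v $ j\<bar> \<le> \<bar>v $ i\<bar>" if "j < n" for j
    using Max_ge[OF fin(1), of "\<bar>v $ j\<bar>"] that \<open>\<bar>v $ i\<bar> = Max S\<close> unfolding S_def by auto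
  have "\<bar>v $ i\<bar> > 0"
    using i_max[OF \<open>j0 < n\<close>] \<open>v $ j0 \<noteq> 0\<close> by linarith
  have "k * v $ i = (M *\<^sub>v v) $ i" using v \<open>i < n\<close> by simp
  also have "\<dots> = (\<Sum>j<n. M $$ (i,j) * v $ j)"
    using M v(1) \<open>i < n\<close> by (simp add: scalar_prod_def lessThan_atLeast0)
  finally have "\<bar>k\<bar> * \<bar>v $ i\<bar> = \<bar>\<Sum>j<n. M $$ (i,j) * v $ j\<bar>"
    by (metis abs_mult)
  also have "\<dots> \<le> (\<Sum>j<n. \<bar>M $$ (i,j) * v $ j\<bar>)"
    by (rule sum_abs)
  also have "\<dots> \<le> (\<Sum>j<n. \<bar>M $$ (i,j)\<bar> * \<bar>v $ i\<bar>)"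
    using i_max by (intro sum_mono) (auto simp: abs_mult intro: mult_left_mono)
  also have "\<dots> = (\<Sum>j<n. \<bar>M $$ (i,j)\<bar>) * \<bar>v $ i\<bar>"
    by (simp add: sum_distrib_right)
  finally have "\<bar>k\<bar> \<le> (\<Sum>j<n. \<bar>M $$ (i,j)\<bar>)"
    using \<open>\<bar>v $ i\<bar> > 0\<close> by simp
  with \<open>i < n\<close> show ?thesis by blast
qed

lemma finite_eigenvalues:
  fixes M :: "real mat"
  assumes "M \<in> carrier_mat n n"
  shows "finite {k. eigenvalue M k}"
proof -
  have "char_poly M \<noteq> 0" using degree_monic_char_poly[OF assms] by auto
  then show ?thesis
    using eigenvalue_root_char_poly[OF assms] poly_roots_finite by simp
qed

lemma lambda1_eigenvalue:
  fixes M :: "real mat"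
  assumes M: "M \<in> carrier_mat n n" and "eigenvalue M k"
  shows "eigenvalue M (lambda1 M)" and "k \<le> lambda1 M"
  using Max_in[OF finite_eigenvalues[OF M]] Max_ge[OF finite_eigenvalues[OF M]] assms(2)
  unfolding lambda1_def by auto

lemma lambda1_ge_mean_row_sum:
  fixes M :: "real mat"
  assumes M: "M \<in> carrier_mat n n" and sym: "\<And>i j. i < n \<Longrightarrow> j < n \<Longrightarrow> M $$ (i,j) = M $$ (j,i)"
    and "n > 0"
  shows "(\<Sum>i<n. \<Sum>j<n. M $$ (i,j)) / n \<le> lambda1 M"
proof -
  obtain \<nu> where "eigenvalue M \<nu>" and "quad_form n M (\<lambda>_. 1) \<le> \<nu> * sum_sq n (\<lambda>_. 1)"
    using symmetric_eigenvalue_ge_rayleigh[OF M sym \<open>n > 0\<close>] by blast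
  then have "(\<Sum>i<n. \<Sum>j<n. M $$ (i,j)) / n \<le> \<nu>"
    using \<open>n > 0\<close> by (simp add: quad_form_def sum_sq_def divide_le_eq mult.commute)
  also have "\<nu> \<le> lambda1 M" by (rule lambda1_eigenvalue(2)[OF M \<open>eigenvalue M \<nu>\<close>])
  finally show ?thesis .
qed

lemma lambda1_le_abs_row_sum:
  fixes M :: "real mat"
  assumes M: "M \<in> carrier_mat n n" and sym: "\<And>i j. i < n \<Longrightarrow> j < n \<Longrightarrow> M $$ (i,j) = M $$ (j,i)"
    and "n > 0"
  shows "\<exists>i<n. lambda1 M \<le> (\<Sum>j<n. \<bar>M $$ (i,j)\<bar>)"
proof -
  obtain \<nu> where "eigenvalue M \<nu>"
    using symmetric_eigenvalue_ge_rayleigh[OF M sym \<open>n > 0\<close>] by blast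
  then obtain i where "i < n" "\<bar>lambda1 M\<bar> \<le> (\<Sum>j<n. \<bar>M $$ (i,j)\<bar>)"
    using eigenvalue_le_abs_row_sum[OF M lambda1_eigenvalue(1)[OF M]] by blast
  then show ?thesis by auto
qed

section \<open>Even moments from moment generating functions\<close>

lemma exp_le_one_plus_x_plus_sq:
  fixes x :: real
  assumes "\<bar>x\<bar> \<le> 1"
  shows "exp x \<le> 1 + x + x^2"
proof (cases "x \<ge> 0")
  case True
  then show ?thesis using exp_bound[of x] assms by simp
next
  case False
  define s where "s = -x"
  have "0 < s" "s \<le> 1" using False assms unfolding s_def by auto
  have "exp x = 1 / exp s" unfolding s_def by (simp add: exp_minus field_simps)
  also have "\<dots> \<le> 1 / (1 + s)"
    using \<open>0 < s\<close> by (intro divide_left_mono) (auto simp: add_pos_pos)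
  also have "\<dots> \<le> 1 - s + s^2"
  proof -
    have "(1 - s + s^2) * (1 + s) = 1 + s^3"
      by (simp add: algebra_simps power2_eq_square power3_eq_cube)
    also have "\<dots> \<ge> 1" using \<open>0 < s\<close> by simp
    finally show ?thesis using \<open>0 < s\<close> by (simp add: divide_le_eq)
  qed
  finally show ?thesis unfolding s_def by simp
qed

lemma bernoulli_centered_mgf_le:
  fixes p t :: real
  assumes "0 \<le> p" "p \<le> 1" "\<bar>t\<bar> \<le> 1"
  shows "measure_pmf.expectation (bernoulli_pmf p) (\<lambda>b. exp (t * (of_bool b - p))) \<le> exp (p * t^2)"
proof -
  have "\<bar>t * (1 - p)\<bar> \<le> 1" "\<bar>t * (0 - p)\<bar> \<le> 1"
    using assms by (simp_all add: abs_mult mult_le_one)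
  then have "p * exp (t * (1 - p)) + (1 - p) * exp (t * (0 - p))
     \<le> p * (1 + t * (1 - p) + (t * (1 - p))^2) + (1 - p) * (1 + t * (0 - p) + (t * (0 - p))^2)"
    using assms by (intro add_mono mult_left_mono exp_le_one_plus_x_plus_sq) auto
  also have "\<dots> = 1 + p * (1 - p) * t^2" by (simp add: algebra_simps power2_eq_square)
  also have "\<dots> \<le> 1 + p * t^2"
    using assms by (intro add_left_mono mult_right_mono) (auto simp: mult_left_le)
  also have "\<dots> \<le> exp (p * t^2)" by simp
  finally show ?thesis using assms by (simp add: mult.commute)
qed

lemma centered_binomial_mgf_le:
  fixes p t :: real
  assumes I: "finite I" and "S \<subseteq> I" and p: "0 \<le> p" "p \<le> 1" and t: "\<bar>t\<bar> \<le> 1"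
  shows "measure_pmf.expectation (Pi_pmf I dflt (\<lambda>_. bernoulli_pmf p))
           (\<lambda>f. exp (t * (\<Sum>e\<in>S. of_bool (f e) - p))) \<le> exp (card S * p * t^2)"
proof -
  let ?E = "measure_pmf.expectation (bernoulli_pmf p)"
  define g where "g = (\<lambda>e b. if e \<in> S then exp (t * (of_bool b - p)) else 1)"
  have product: "exp (t * (\<Sum>e\<in>S. of_bool (f e) - p)) = (\<Prod>e\<in>I. g e (f e))" for f
  proof -
    have "exp (t * (\<Sum>e\<in>S. of_bool (f e) - p)) = (\<Prod>e\<in>S. g e (f e))"
      using finite_subset[OF \<open>S \<subseteq> I\<close> I] by (simp add: sum_distrib_left exp_sum g_def)
    also have "\<dots> = (\<Prod>e\<in>I. g e (f e))"
      using \<open>S \<subseteq> I\<close> by (intro prod.mono_neutral_left I) (auto simp: g_def)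
    finally show ?thesis .
  qed
  have "measure_pmf.expectation (Pi_pmf I dflt (\<lambda>_. bernoulli_pmf p))
          (\<lambda>f. exp (t * (\<Sum>e\<in>S. of_bool (f e) - p))) = (\<Prod>e\<in>I. ?E (g e))"
    unfolding product
    by (rule expectation_prod_Pi_pmf[OF I]) (auto simp: g_def intro!: integrable_measure_pmf_finite)
  also have "\<dots> = (\<Prod>e\<in>S. ?E (g e))"
    using \<open>S \<subseteq> I\<close> by (intro prod.mono_neutral_right I) (auto simp: g_def)
  also have "\<dots> \<le> (\<Prod>e\<in>S. exp (p * t^2))"
    using bernoulli_centered_mgf_le[OF p t]
    by (intro prod_mono) (auto simp: g_def intro!: Bochner_Integration.integral_nonneg)
  also have "\<dots> = exp (card S * p * t^2)"
    by (simp add: exp_of_nat_mult[symmetric] mult.assoc)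
  finally show ?thesis .
qed

lemma power_le_fact_mult_exp:
  fixes y :: real
  assumes "0 \<le> y"
  shows "y^k \<le> fact k * exp y"
proof -
  have sums: "(\<lambda>n. y^n /\<^sub>R fact n) sums exp y" by (rule exp_converges)
  have "(\<Sum>n\<in>{k}. y^n /\<^sub>R fact n) \<le> (\<Sum>n. y^n /\<^sub>R fact n)"
    by (rule sum_le_suminf) (use sums assms in \<open>auto simp: sums_iff\<close>)
  then have "y^k / fact k \<le> exp y"
    using sums_unique[OF sums] by (simp add: divide_inverse mult.commute)
  then show ?thesis by (simp add: divide_le_eq mult.commute)
qed

lemma even_power_le_exp_sum:
  fixes X t :: real
  assumes "t > 0"
  shows "X^(2*m) \<le> fact (2*m) / t^(2*m) * (exp (t * X) + exp (- t * X))"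
proof -
  have "t^(2*m) * X^(2*m) = (t * \<bar>X\<bar>)^(2*m)"
    by (simp add: power_mult_distrib power_even_abs)
  also have "\<dots> \<le> fact (2*m) * exp (t * \<bar>X\<bar>)"
    using assms by (intro power_le_fact_mult_exp) simp
  also have "\<dots> \<le> fact (2*m) * (exp (t * X) + exp (- t * X))"
    using assms by (intro mult_left_mono) (auto simp: abs_if add_pos_pos)
  finally show ?thesis
    using assms by (simp add: field_simps)
qed

text \<open>The exponential moment is only evaluated at t = \<plusminus>1/\<surd>\<mu>, where its bound is exp 1.\<close>

lemma even_moment_le_of_mgf:
  fixes P :: "'a pmf" and X :: "'a \<Rightarrow> real"
  assumes fin: "finite (set_pmf P)" and "\<mu> > 0"
    and mgf: "\<And>t. \<bar>t\<bar> \<le> 1 / sqrt \<mu> \<Longrightarrow> measure_pmf.expectation P (\<lambda>x. exp (t * X x)) \<le> exp (\<mu> * t^2)"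
  shows "measure_pmf.expectation P (\<lambda>x. X x ^ (2*m)) \<le> 2 * exp 1 * fact (2*m) * \<mu>^m"
proof -
  let ?E = "measure_pmf.expectation P"
  define t where "t = 1 / sqrt \<mu>"
  have "t > 0" "\<mu> * t^2 = 1" unfolding t_def using \<open>\<mu> > 0\<close> by (auto simp: power_divide)
  have "t^2 = 1 / \<mu>" using \<open>\<mu> * t^2 = 1\<close> \<open>\<mu> > 0\<close> by (simp add: field_simps)
  then have weight: "fact (2*m) / t^(2*m) = fact (2*m) * \<mu>^m"
    by (simp add: power_mult power_divide)
  have "?E (\<lambda>x. X x ^ (2*m)) \<le> ?E (\<lambda>x. fact (2*m) / t^(2*m) * (exp (t * X x) + exp (- t * X x)))"
    by (intro integral_mono integrable_measure_pmf_finite[OF fin] even_power_le_exp_sum \<open>t > 0\<close>)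
  also have "\<dots> = fact (2*m) / t^(2*m) * (?E (\<lambda>x. exp (t * X x)) + ?E (\<lambda>x. exp (- t * X x)))"
    by (simp add: integrable_measure_pmf_finite[OF fin])
  also have "\<dots> \<le> fact (2*m) / t^(2*m) * (exp (\<mu> * t^2) + exp (\<mu> * (- t)^2))"
    using \<open>\<mu> > 0\<close> by (intro mult_left_mono add_mono mgf) (simp_all add: t_def)
  also have "\<dots> = 2 * exp 1 * fact (2*m) * \<mu>^m"
    using \<open>\<mu> * t^2 = 1\<close> weight by simp
  finally show ?thesis .
qed

lemma even_power_diff_le:
  fixes a b :: real
  shows "(a - b)^(2*m) \<le> 2^(2*m) * (a^(2*m) + b^(2*m))"
proof -
  have "\<bar>a - b\<bar>^(2*m) \<le> (2 * max \<bar>a\<bar> \<bar>b\<bar>)^(2*m)" by (intro power_mono) auto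
  also have "\<dots> = 2^(2*m) * (max \<bar>a\<bar> \<bar>b\<bar>)^(2*m)" by (simp add: power_mult_distrib)
  also have "(max \<bar>a\<bar> \<bar>b\<bar>)^(2*m) \<le> \<bar>a\<bar>^(2*m) + \<bar>b\<bar>^(2*m)"
    by (cases "\<bar>a\<bar> \<le> \<bar>b\<bar>") (auto simp: max_def)
  finally show ?thesis by (simp add: power_even_abs mult_left_mono)
qed

lemma even_moment_about_mean_le:
  fixes P :: "'a pmf" and X :: "'a \<Rightarrow> real"
  assumes fin: "finite (set_pmf P)"
  shows "measure_pmf.expectation P (\<lambda>x. (X x - measure_pmf.expectation P X)^(2*m))
           \<le> 2^(2*m+1) * measure_pmf.expectation P (\<lambda>x. (X x - c)^(2*m))"
proof -
  let ?E = "measure_pmf.expectation P"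
  let ?D = "?E (\<lambda>x. (X x - c)^(2*m))"
  have int: "integrable P f" for f :: "'a \<Rightarrow> real"
    by (rule integrable_measure_pmf_finite[OF fin])
  have "?E (\<lambda>x. X x - c) = ?E X - c"
    by (simp add: int)
  moreover have "(\<lambda>y. y^(2*m)) (?E (\<lambda>x. X x - c)) \<le> ?E (\<lambda>x. (\<lambda>y. y^(2*m)) (X x - c))"
    by (rule measure_pmf.jensens_inequality[where I=UNIV]) (auto simp: int convex_power_even)
  ultimately have jensen: "(?E X - c)^(2*m) \<le> ?D" by simp
  have "?E (\<lambda>x. (X x - ?E X)^(2*m)) \<le> ?E (\<lambda>x. 2^(2*m) * ((X x - c)^(2*m) + (?E X - c)^(2*m)))"
    using even_power_diff_le[of "X _ - c" "?E X - c"] by (intro integral_mono int) simp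
  also have "\<dots> = 2^(2*m) * (?D + (?E X - c)^(2*m))"
    by (simp add: int)
  also have "\<dots> \<le> 2^(2*m) * (?D + ?D)"
    using jensen by simp
  finally show ?thesis by simp
qed

section \<open>Degrees of the random graph\<close>

definition upper_pairs :: "nat \<Rightarrow> (nat \<times> nat) set" where
  "upper_pairs n = {(i,j). i \<le> j \<and> j < n}"

definition adj :: "(nat \<times> nat \<Rightarrow> bool) \<Rightarrow> nat \<Rightarrow> nat \<Rightarrow> real" where
  "adj f i j = of_bool (f (min i j, max i j))"

definition vertex_degree :: "nat \<Rightarrow> (nat \<times> nat \<Rightarrow> bool) \<Rightarrow> nat \<Rightarrow> real" where
  "vertex_degree n f i = (\<Sum>j<n. adj f i j)"

lemma finite_upper_pairs: "finite (upper_pairs n)"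
  by (rule finite_subset[of _ "{..<n} \<times> {..<n}"]) (auto simp: upper_pairs_def)

lemma entries_pmf_eq: "entries_pmf n p = Pi_pmf (upper_pairs n) False (\<lambda>_. bernoulli_pmf p)"
  unfolding entries_pmf_def upper_pairs_def by simp

lemma finite_set_pmf_entries_pmf: "finite (set_pmf (entries_pmf n p))"
proof -
  have "set_pmf (entries_pmf n p) \<subseteq> {f. \<forall>x. x \<notin> upper_pairs n \<longrightarrow> f x = False}"
    unfolding entries_pmf_eq by (rule set_Pi_pmf_subset[OF finite_upper_pairs])
  also have "\<dots> \<subseteq> (\<lambda>S x. x \<in> S) ` Pow (upper_pairs n)"
  proof
    fix f assume "f \<in> {f. \<forall>x. x \<notin> upper_pairs n \<longrightarrow> f x = False}"
    then have "f = (\<lambda>x. x \<in> {x \<in> upper_pairs n. f x})" by (auto simp: fun_eq_iff)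
    then show "f \<in> (\<lambda>S x. x \<in> S) ` Pow (upper_pairs n)" by blast
  qed
  finally show ?thesis by (rule finite_subset) (simp add: finite_upper_pairs)
qed

lemma integrable_entries_pmf [simp]: "integrable (measure_pmf (entries_pmf n p)) (g :: _ \<Rightarrow> real)"
  by (rule integrable_measure_pmf_finite[OF finite_set_pmf_entries_pmf])

lemma vertex_degree_eq_sum_pairs:
  assumes "i < n"
  obtains S where "S \<subseteq> upper_pairs n" "card S = n" "\<And>f. vertex_degree n f i = (\<Sum>e\<in>S. of_bool (f e))"
proof
  define \<sigma> where "\<sigma> = (\<lambda>j::nat. (min i j, max i j))"
  have inj: "inj_on \<sigma> {..<n}"
    unfolding inj_on_def \<sigma>_def by (auto simp: min_def max_def split: if_splits)
  show "\<sigma> ` {..<n} \<subseteq> upper_pairs n"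
    using assms unfolding \<sigma>_def upper_pairs_def by auto
  show "card (\<sigma> ` {..<n}) = n"
    using card_image[OF inj] by simp
  show "vertex_degree n f i = (\<Sum>e\<in>\<sigma> ` {..<n}. of_bool (f e))" for f
    unfolding vertex_degree_def sum.reindex[OF inj] by (simp add: adj_def \<sigma>_def)
qed

lemma expectation_entry:
  assumes "e \<in> upper_pairs n" "0 \<le> p" "p \<le> 1"
  shows "measure_pmf.expectation (entries_pmf n p) (\<lambda>f. of_bool (f e)) = p"
proof -
  have "measure_pmf.expectation (entries_pmf n p) (\<lambda>f. of_bool (f e))
      = measure_pmf.expectation (map_pmf (\<lambda>f. f e) (entries_pmf n p)) (of_bool :: _ \<Rightarrow> real)"
    by simp
  also have "map_pmf (\<lambda>f. f e) (entries_pmf n p) = bernoulli_pmf p"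
    unfolding entries_pmf_eq
    using Pi_pmf_component[OF finite_upper_pairs, where x=e and dflt=False and p="\<lambda>_. bernoulli_pmf p"]
      assms(1) by simp
  finally show ?thesis using assms by simp
qed

lemma expectation_vertex_degree:
  assumes "i < n" "0 \<le> p" "p \<le> 1"
  shows "measure_pmf.expectation (entries_pmf n p) (\<lambda>f. vertex_degree n f i) = n * p"
proof -
  obtain S where S: "S \<subseteq> upper_pairs n" "card S = n"
    and deg: "\<And>f. vertex_degree n f i = (\<Sum>e\<in>S. of_bool (f e))"
    using vertex_degree_eq_sum_pairs[OF \<open>i < n\<close>] by blast
  have "measure_pmf.expectation (entries_pmf n p) (\<lambda>f. vertex_degree n f i)
      = (\<Sum>e\<in>S. measure_pmf.expectation (entries_pmf n p) (\<lambda>f. of_bool (f e)))"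
    unfolding deg by (rule Bochner_Integration.integral_sum) simp
  also have "\<dots> = (\<Sum>e\<in>S. p)"
    using S(1) assms by (intro sum.cong refl expectation_entry) auto
  finally show ?thesis using S(2) by simp
qed

lemma mgf_vertex_degree_le:
  assumes "i < n" and p: "0 \<le> p" "p \<le> 1" and t: "\<bar>t\<bar> \<le> 1"
  shows "measure_pmf.expectation (entries_pmf n p) (\<lambda>f. exp (t * (vertex_degree n f i - n * p)))
           \<le> exp (n * p * t^2)"
proof -
  obtain S where S: "S \<subseteq> upper_pairs n" "card S = n"
    and deg: "\<And>f. vertex_degree n f i = (\<Sum>e\<in>S. of_bool (f e))"
    using vertex_degree_eq_sum_pairs[OF \<open>i < n\<close>] by blast
  have centered: "vertex_degree n f i - n * p = (\<Sum>e\<in>S. of_bool (f e) - p)" for f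
    unfolding deg sum_subtractf using S(2) by simp
  have "measure_pmf.expectation (entries_pmf n p) (\<lambda>f. exp (t * (vertex_degree n f i - n * p)))
      = measure_pmf.expectation (Pi_pmf (upper_pairs n) False (\<lambda>_. bernoulli_pmf p))
          (\<lambda>f. exp (t * (\<Sum>e\<in>S. of_bool (f e) - p)))"
    by (simp only: centered entries_pmf_eq)
  also have "\<dots> \<le> exp (card S * p * t^2)"
    by (rule centered_binomial_mgf_le[OF finite_upper_pairs S(1) p t])
  finally show ?thesis
    using S(2) by simp
qed

lemma even_moment_vertex_degree_le:
  assumes "i < n" "0 \<le> p" "p \<le> 1" "1 \<le> n * p"
  shows "measure_pmf.expectation (entries_pmf n p) (\<lambda>f. (vertex_degree n f i - n * p)^(2*m))
           \<le> 2 * exp 1 * fact (2*m) * (n * p)^m"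
proof (rule even_moment_le_of_mgf[OF finite_set_pmf_entries_pmf])
  show "n * p > 0" using assms by simp
  fix t :: real
  assume "\<bar>t\<bar> \<le> 1 / sqrt (n * p)"
  also have "1 / sqrt (n * p) \<le> 1" using assms by simp
  finally show "measure_pmf.expectation (entries_pmf n p) (\<lambda>f. exp (t * (vertex_degree n f i - n * p)))
                  \<le> exp (n * p * t^2)"
    by (rule mgf_vertex_degree_le[OF assms(1-3)])
qed

section \<open>The largest eigenvalue of the random matrix\<close>

lemma sym_bern_mat_carrier: "sym_bern_mat n f \<in> carrier_mat n n"
  unfolding sym_bern_mat_def by simp

lemma sym_bern_mat_index: "i < n \<Longrightarrow> j < n \<Longrightarrow> sym_bern_mat n f $$ (i,j) = adj f i j"
  unfolding sym_bern_mat_def adj_def by simp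

lemma sym_bern_mat_symmetric:
  "i < n \<Longrightarrow> j < n \<Longrightarrow> sym_bern_mat n f $$ (i,j) = sym_bern_mat n f $$ (j,i)"
  by (simp add: sym_bern_mat_index adj_def min.commute max.commute)

lemma lambda1_sym_bern_mat_ge_mean_degree:
  assumes "n > 0"
  shows "(\<Sum>i<n. vertex_degree n f i) / n \<le> lambda1 (sym_bern_mat n f)"
  using lambda1_ge_mean_row_sum[OF sym_bern_mat_carrier sym_bern_mat_symmetric assms]
  by (simp add: vertex_degree_def sym_bern_mat_index)

lemma lambda1_sym_bern_mat_le_degree:
  assumes "n > 0"
  shows "\<exists>i<n. lambda1 (sym_bern_mat n f) \<le> vertex_degree n f i"
proof -
  have "(\<Sum>j<n. \<bar>sym_bern_mat n f $$ (i,j)\<bar>) = vertex_degree n f i" if "i < n" for i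
    unfolding vertex_degree_def using that by (intro sum.cong) (auto simp: sym_bern_mat_index adj_def)
  then show ?thesis
    using lambda1_le_abs_row_sum[OF sym_bern_mat_carrier sym_bern_mat_symmetric assms] by metis
qed

lemma even_power_deviation_le_sum:
  fixes d :: "nat \<Rightarrow> real"
  assumes "n > 0" and mean: "(\<Sum>i<n. d i) / n \<le> x" and "j < n" "x \<le> d j"
  shows "(x - c)^(2*m) \<le> (\<Sum>i<n. (d i - c)^(2*m))"
proof -
  have "\<exists>i<n. \<bar>x - c\<bar> \<le> \<bar>d i - c\<bar>"
  proof (cases "x \<ge> c")
    case True
    then show ?thesis using \<open>j < n\<close> \<open>x \<le> d j\<close> by (intro exI[of _ j]) auto
  next
    case False
    have "\<exists>i<n. d i \<le> x"
    proof (rule ccontr)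
      assume "\<not> ?thesis"
      then have "x < d i" if "i < n" for i using that by auto
      then have "(\<Sum>i<n. x) < (\<Sum>i<n. d i)" using \<open>n > 0\<close> by (intro sum_strict_mono) auto
      with mean \<open>n > 0\<close> show False by (simp add: divide_le_eq mult.commute)
    qed
    with False show ?thesis by force
  qed
  then obtain i where "i < n" "\<bar>x - c\<bar> \<le> \<bar>d i - c\<bar>" by blast
  then have "\<bar>x - c\<bar>^(2*m) \<le> \<bar>d i - c\<bar>^(2*m)" by (intro power_mono) auto
  also have "\<dots> \<le> (\<Sum>i<n. \<bar>d i - c\<bar>^(2*m))"
    using \<open>i < n\<close> by (intro member_le_sum) auto
  finally show ?thesis by (simp add: power_even_abs)
qed

lemma mean_degree_le_E_lambda1:
  assumes "n > 0" "0 \<le> p" "p \<le> 1"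
  shows "n * p \<le> E_lambda1 n p"
proof -
  let ?E = "measure_pmf.expectation (entries_pmf n p)"
  have "n * p = (\<Sum>i<n. ?E (\<lambda>f. vertex_degree n f i)) / n"
    using assms by (simp add: expectation_vertex_degree)
  also have "\<dots> = ?E (\<lambda>f. (\<Sum>i<n. vertex_degree n f i) / n)"
    by simp
  also have "\<dots> \<le> E_lambda1 n p"
    unfolding E_lambda1_def
    by (intro integral_mono integrable_entries_pmf lambda1_sym_bern_mat_ge_mean_degree \<open>n > 0\<close>)
  finally show ?thesis .
qed

lemma even_moment_lambda1_about_mean_degree:
  assumes "n > 0" "0 \<le> p" "p \<le> 1" "1 \<le> n * p"
  shows "measure_pmf.expectation (entries_pmf n p) (\<lambda>f. (lambda1 (sym_bern_mat n f) - n * p)^(2*m))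
           \<le> n * (2 * exp 1 * fact (2*m) * (n * p)^m)"
proof -
  let ?E = "measure_pmf.expectation (entries_pmf n p)"
  have "?E (\<lambda>f. (lambda1 (sym_bern_mat n f) - n * p)^(2*m))
      \<le> ?E (\<lambda>f. \<Sum>i<n. (vertex_degree n f i - n * p)^(2*m))"
  proof (intro integral_mono integrable_entries_pmf)
    fix f
    obtain j where "j < n" "lambda1 (sym_bern_mat n f) \<le> vertex_degree n f j"
      using lambda1_sym_bern_mat_le_degree[OF \<open>n > 0\<close>] by blast
    then show "(lambda1 (sym_bern_mat n f) - n * p)^(2*m) \<le> (\<Sum>i<n. (vertex_degree n f i - n * p)^(2*m))"
      by (intro even_power_deviation_le_sum \<open>n > 0\<close> lambda1_sym_bern_mat_ge_mean_degree)
  qed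
  also have "\<dots> = (\<Sum>i<n. ?E (\<lambda>f. (vertex_degree n f i - n * p)^(2*m)))"
    by (rule Bochner_Integration.integral_sum) simp
  also have "\<dots> \<le> (\<Sum>i<n. 2 * exp 1 * fact (2*m) * (n * p)^m)"
    using assms by (intro sum_mono even_moment_vertex_degree_le) auto
  finally show ?thesis by simp
qed

lemma four_pow_mult_fact_le: "2^(2*m) * fact (2*m) \<le> (16 * (real m)^2)^m"
proof -
  have "2^(2*m) * fact (2*m) \<le> 2^(2*m) * (real (2*m))^(2*m)"
    using fact_le_power[of "2*m", where 'a=real] by (intro mult_left_mono) auto
  also have "\<dots> = ((2 * real (2*m))^2)^m"
    by (simp only: power_mult_distrib[symmetric] power_mult)
  also have "(2 * real (2*m))^2 = 16 * (real m)^2"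
    by (simp add: power2_eq_square)
  finally show ?thesis .
qed

lemma relative_moment_lambda1_le:
  assumes "n > 0" "0 \<le> p" "p \<le> 1" "1 \<le> n * p"
  shows "measure_pmf.expectation (entries_pmf n p)
           (\<lambda>f. (lambda1 (sym_bern_mat n f) / E_lambda1 n p - 1)^(2*m))
         \<le> 4 * exp 1 * n * (16 * (real m)^2 / (n * p))^m"
proof -
  let ?E = "measure_pmf.expectation (entries_pmf n p)"
  let ?lam = "\<lambda>f. lambda1 (sym_bern_mat n f)"
  define L where "L = E_lambda1 n p"
  define \<mu> where "\<mu> = n * p"
  define B where "B = 2^(2*m+1) * (n * (2 * exp 1 * fact (2*m) * \<mu>^m))"
  have "\<mu> \<le> L" "1 \<le> \<mu>"
    using mean_degree_le_E_lambda1[OF assms(1-3)] assms(4) unfolding L_def \<mu>_def by auto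
  have "?E (\<lambda>f. (?lam f - L)^(2*m)) \<le> 2^(2*m+1) * ?E (\<lambda>f. (?lam f - \<mu>)^(2*m))"
    unfolding L_def E_lambda1_def by (rule even_moment_about_mean_le[OF finite_set_pmf_entries_pmf])
  also have "\<dots> \<le> B"
    unfolding B_def \<mu>_def
    by (intro mult_left_mono even_moment_lambda1_about_mean_degree assms) simp
  finally have centred: "?E (\<lambda>f. (?lam f - L)^(2*m)) \<le> B" .
  have "x / L - 1 = (x - L) / L" for x
    using \<open>\<mu> \<le> L\<close> \<open>1 \<le> \<mu>\<close> by (simp add: field_simps)
  then have "?E (\<lambda>f. (?lam f / L - 1)^(2*m)) = ?E (\<lambda>f. (?lam f - L)^(2*m)) / L^(2*m)"
    by (simp add: power_divide)
  also have "\<dots> \<le> B / L^(2*m)"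
    using centred \<open>\<mu> \<le> L\<close> \<open>1 \<le> \<mu>\<close> by (intro divide_right_mono) simp_all
  also have "\<dots> \<le> B / \<mu>^(2*m)"
    unfolding B_def using \<open>\<mu> \<le> L\<close> \<open>1 \<le> \<mu>\<close> by (intro divide_left_mono power_mono) simp_all
  also have "\<dots> = 4 * exp 1 * n * (2^(2*m) * fact (2*m)) / \<mu>^m"
  proof -
    have "\<mu>^(2*m) = \<mu>^m * \<mu>^m" by (simp add: mult_2 power_add)
    then show ?thesis
      unfolding B_def using \<open>1 \<le> \<mu>\<close> by (simp add: field_simps)
  qed
  also have "\<dots> \<le> 4 * exp 1 * n * (16 * (real m)^2)^m / \<mu>^m"
    using \<open>1 \<le> \<mu>\<close> four_pow_mult_fact_le by (intro divide_right_mono mult_left_mono) simp_all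
  finally show ?thesis
    unfolding L_def \<mu>_def by (simp add: power_divide)
qed

text \<open>The ratio is at most n^(-w), and m \<ge> 4/w turns its m-th power into at most n^(-4).\<close>

lemma moment_ratio_power_le:
  fixes w p :: real
  assumes "n > 0" "0 < w" "4 / w \<le> m" "p > 0"
    and m_le: "4 * real m \<le> sqrt (p * real n powr (1 - w))"
  shows "(16 * (real m)^2 / (n * p))^m \<le> inverse ((real n)^4)"
proof -
  have "real n powr (1 - w) = n * real n powr (- w)"
    using powr_add[of "real n" 1 "- w"] \<open>n > 0\<close> by simp
  moreover have "16 * (real m)^2 \<le> p * real n powr (1 - w)"
    using power_mono[OF m_le, of 2] \<open>p > 0\<close> by (simp add: power_mult_distrib)
  ultimately have "16 * (real m)^2 / (n * p) \<le> real n powr (- w)"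
    using \<open>p > 0\<close> \<open>n > 0\<close> by (simp add: divide_le_eq mult_ac)
  then have "(16 * (real m)^2 / (n * p))^m \<le> (real n powr (- w))^m"
    using \<open>p > 0\<close> by (intro power_mono) auto
  also have "\<dots> = real n powr (- (w * m))"
    using \<open>n > 0\<close> by (simp add: powr_power mult.commute)
  also have "\<dots> \<le> real n powr (- 4)"
    using \<open>n > 0\<close> \<open>0 < w\<close> \<open>4 / w \<le> m\<close> by (intro powr_mono) (auto simp: divide_le_eq mult.commute)
  also have "\<dots> = inverse ((real n)^4)"
    using \<open>n > 0\<close> by (simp add: powr_minus powr_realpow)
  finally show ?thesis .
qed

lemma scaled_relative_moment_le:
  fixes w p :: real
  assumes "n > 0" "0 < w" "4 / w \<le> m" "real n powr (w - 1) \<le> p" "p \<le> 1"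
    and "4 * real m \<le> sqrt (p * real n powr (1 - w))"
  shows "(real n)^2 * p * measure_pmf.expectation (entries_pmf n p)
           (\<lambda>f. (lambda1 (sym_bern_mat n f) / E_lambda1 n p - 1)^(2*m))
         \<le> 4 * exp 1 / n"
proof -
  let ?E = "measure_pmf.expectation (entries_pmf n p)
              (\<lambda>f. (lambda1 (sym_bern_mat n f) / E_lambda1 n p - 1)^(2*m))"
  have "0 < real n powr (w - 1)" using \<open>n > 0\<close> by simp
  with assms(4) have "p > 0" by linarith
  have "1 \<le> real n powr w" using \<open>n > 0\<close> \<open>0 < w\<close> by (intro ge_one_powr_ge_zero) auto
  also have "real n powr w = n * real n powr (w - 1)"
    using powr_add[of "real n" 1 "w - 1"] \<open>n > 0\<close> by simp
  also have "\<dots> \<le> n * p" using assms(4) by (intro mult_left_mono) auto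
  finally have "1 \<le> n * p" .
  have "?E \<ge> 0" by (intro Bochner_Integration.integral_nonneg) (simp add: zero_le_even_power)
  have "(real n)^2 * p * ?E \<le> (real n)^2 * ?E"
    using \<open>?E \<ge> 0\<close> \<open>p \<le> 1\<close> by (intro mult_right_mono) (auto simp: mult_left_le)
  also have "\<dots> \<le> (real n)^2 * (4 * exp 1 * n * (16 * (real m)^2 / (n * p))^m)"
    using relative_moment_lambda1_le[OF \<open>n > 0\<close> _ \<open>p \<le> 1\<close> \<open>1 \<le> n * p\<close>] \<open>p > 0\<close>
    by (intro mult_left_mono) auto
  also have "\<dots> \<le> (real n)^2 * (4 * exp 1 * n * inverse ((real n)^4))"
    using moment_ratio_power_le[OF assms(1-3) \<open>p > 0\<close> assms(6)] by (intro mult_left_mono) auto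
  also have "\<dots> = 4 * exp 1 / n"
    using \<open>n > 0\<close> by (simp add: field_simps power2_eq_square power4_eq_xxxx)
  finally show ?thesis .
qed

theorem lemma4:
  "\<exists>c::real. c > 0 \<and> (\<exists>mw :: real \<Rightarrow> nat.
     \<forall>w p m. 0 < w \<and> w < 1 \<longrightarrow>
       (\<forall>\<^sub>F n in sequentially. real n powr (w - 1) \<le> p n \<and> p n \<le> 1/2) \<longrightarrow>
       (\<forall>\<^sub>F n in sequentially. mw w \<le> m n \<and>
            real (m n) \<le> c * min (real n powr (w/4)) (sqrt (p n * real n powr (1 - w)))) \<longrightarrow>
       ((\<lambda>n. (real n)^2 * p n *
          measure_pmf.expectation (entries_pmf n (p n))
            (\<lambda>f. (lambda1 (sym_bern_mat n f) / E_lambda1 n (p n) - 1) ^ (2 * m n)))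
        \<longlonglongrightarrow> 0))"
proof (intro exI[of _ "1/4::real"] conjI exI[of _ "\<lambda>w. nat \<lceil>4 / w\<rceil>"] allI impI)
  fix w :: real and p :: "nat \<Rightarrow> real" and m :: "nat \<Rightarrow> nat"
  assume w: "0 < w \<and> w < 1"
    and p: "\<forall>\<^sub>F n in sequentially. real n powr (w - 1) \<le> p n \<and> p n \<le> 1/2"
    and m: "\<forall>\<^sub>F n in sequentially. nat \<lceil>4 / w\<rceil> \<le> m n \<and>
              real (m n) \<le> 1/4 * min (real n powr (w/4)) (sqrt (p n * real n powr (1 - w)))"
  let ?Q = "\<lambda>n. (real n)^2 * p n * measure_pmf.expectation (entries_pmf n (p n))
              (\<lambda>f. (lambda1 (sym_bern_mat n f) / E_lambda1 n (p n) - 1) ^ (2 * m n))"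
  have "\<forall>\<^sub>F n in sequentially. 0 \<le> ?Q n \<and> ?Q n \<le> 4 * exp 1 / n"
    using p m eventually_gt_at_top[of "0::nat"]
  proof eventually_elim
    case (elim n)
    have "0 < real n powr (w - 1)" using elim(3) by simp
    with elim(1) have "0 < p n" by linarith
    have "min (real n powr (w/4)) (sqrt (p n * real n powr (1 - w))) \<le> sqrt (p n * real n powr (1 - w))"
      by (rule min.cobounded2)
    with elim(2) have "4 * real (m n) \<le> sqrt (p n * real n powr (1 - w))" by linarith
    moreover from elim(2) have "4 / w \<le> m n" by linarith
    ultimately have "?Q n \<le> 4 * exp 1 / n"
      using w elim(1) by (intro scaled_relative_moment_le[OF elim(3)]) simp_all
    moreover have "0 \<le> ?Q n"
      using \<open>0 < p n\<close> by (simp add: Bochner_Integration.integral_nonneg zero_le_even_power)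
    ultimately show ?case by simp
  qed
  then have "\<forall>\<^sub>F n in sequentially. 0 \<le> ?Q n" "\<forall>\<^sub>F n in sequentially. ?Q n \<le> 4 * exp 1 / n"
    unfolding eventually_conj_iff by blast+
  then show "?Q \<longlonglongrightarrow> 0"
    by (rule tendsto_sandwich[OF _ _ tendsto_const lim_const_over_n])
qed (simp)

end
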